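(* Under the hypotheses and notation of the noisy quadratic model below (with $0<\eta h_j<1$ for all $j$, $\alpha\in(0,1]$, $\beta_i\ge0$, $\sum_{i=0}^{k-1}\beta_i=1$, $\beta_0<1$), the stationary variance of AvgLookahead $$\mathbb V^*_{\mathrm{AvgLA}}=\alpha^2\,\mathbf Y\,\big(\mathbf I-\mathbf A^2\big)^{-1}\,\eta^2\mathbf H^2\Sigma\,(\mathbf I-\mathbf M^2)^{-1}$$ satisfies, entrywise, $$\mathbb V^*_{\mathrm{AvgLA}}\ \le\ \mathbb V^*_{\mathrm{ERM}}:=\eta^2\mathbf H^2\Sigma\,(\mathbf I-\mathbf M^2)^{-1},$$ where $\mathbb V^*_{\mathrm{ERM}}$ is the stationary coordinatewise variance of plain SGD $\boldsymbol\theta_{t+1}=\mathbf M\boldsymbol\theta_t+\eta\mathbf H\mathbf c_t$.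
   Context: Noisy quadratic model: $\mathbf H=\mathrm{diag}(h_1,\dots,h_d)$, $\Sigma=\mathrm{diag}(\sigma_1^2,\dots,\sigma_d^2)$ with $\sigma_j^2\ge0$, stochastic loss $\mathcal L(\boldsymbol\theta;\mathbf c)=\tfrac12(\boldsymbol\theta-\mathbf c)^\top\mathbf H(\boldsymbol\theta-\mathbf c)$ with i.i.d. $\mathbf c\sim\mathcal N(\mathbf 0,\Sigma)$ drawn at each step; $\mathbf M=\mathbf I-\eta\mathbf H$. AvgLookahead: fast weights $\boldsymbol\theta_{t,0}=\boldsymbol\phi_t$, $\boldsymbol\theta_{t,i+1}=\mathbf M\boldsymbol\theta_{t,i}+\eta\mathbf H\mathbf c_{t,i}$, slow update $\boldsymbol\phi_{t+1}=(1-\alpha)\boldsymbol\phi_t+\alpha\sum_{i=0}^{k-1}\beta_i\boldsymbol\theta_{t,i}$. Here $\mathbf A=(1-\alpha)\mathbf I+\alpha\sum_{i=0}^{k-1}\beta_i\mathbf M^i$ and $\mathbf Y=\sum_{i=0}^{k-1}\beta_i^2(\mathbf I-\mathbf M^{2i})+2\sum_{i=0}^{k-1}\sum_{j=0}^{i-1}\beta_i\beta_j\mathbf M^{i-j}(\mathbf I-\mathbf M^{2j})$. All matrices are diagonal and all inequalities are entrywise. *)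

theory Defs
  imports "HOL-Analysis.Analysis"
begin

text \<open>All matrices of the noisy quadratic model are diagonal, so each is represented by
its vector of diagonal entries (indexed by a finite type 'd), and every matrix
operation (product, inverse, comparison) acts coordinatewise.\<close>

definition Mdiag :: "real \<Rightarrow> real ^ 'd \<Rightarrow> real ^ 'd" where
  "Mdiag \<eta> h = (\<chi> j. 1 - \<eta> * h $ j)"

definition A_coef :: "real \<Rightarrow> (nat \<Rightarrow> real) \<Rightarrow> nat \<Rightarrow> real \<Rightarrow> real" where
  "A_coef \<alpha> \<beta> k m = (1 - \<alpha>) + \<alpha> * (\<Sum>i<k. \<beta> i * m ^ i)"

definition Y_coef :: "(nat \<Rightarrow> real) \<Rightarrow> nat \<Rightarrow> real \<Rightarrow> real" where
  "Y_coef \<beta> k m =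
     (\<Sum>i<k. (\<beta> i)^2 * (1 - m ^ (2*i)))
     + 2 * (\<Sum>i<k. \<Sum>j<i. \<beta> i * \<beta> j * m ^ (i - j) * (1 - m ^ (2*j)))"

definition V_ERM :: "real \<Rightarrow> real ^ 'd \<Rightarrow> real ^ 'd \<Rightarrow> real ^ 'd" where
  "V_ERM \<eta> h \<sigma>2 = (\<chi> j. \<eta>^2 * (h $ j)^2 * \<sigma>2 $ j / (1 - (Mdiag \<eta> h $ j)^2))"

definition V_AvgLA :: "real \<Rightarrow> (nat \<Rightarrow> real) \<Rightarrow> nat \<Rightarrow> real \<Rightarrow> real ^ 'd \<Rightarrow> real ^ 'd \<Rightarrow> real ^ 'd" where
  "V_AvgLA \<alpha> \<beta> k \<eta> h \<sigma>2 =
     (\<chi> j. \<alpha>^2 * Y_coef \<beta> k (Mdiag \<eta> h $ j)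
            / (1 - (A_coef \<alpha> \<beta> k (Mdiag \<eta> h $ j))^2)
            * (V_ERM \<eta> h \<sigma>2 $ j))"

end

theory Submission
  imports Defs
begin

text \<open>Fix a coordinate with M-entry \<open>m \<in> (0,1)\<close> and put \<open>S = \<Sum>\<^sub>i \<beta>\<^sub>i m\<^sup>i\<close>, so that the
A-entry is \<open>1 - \<alpha>(1 - S)\<close>. Comparing \<open>S\<^sup>2\<close> with \<open>(\<Sum>\<^sub>i \<beta>\<^sub>i)\<^sup>2 = 1\<close> term by term shows
\<open>Y \<le> 1 - S\<^sup>2\<close>; since \<open>0 \<le> S < 1\<close> and \<open>\<alpha> \<le> 1\<close>, the factor \<open>\<alpha>\<^sup>2 Y / (1 - A\<^sup>2)\<close> by which
V*_AvgLA differs from V*_ERM is then at most \<open>\<alpha>(2 - u)/(2 - \<alpha>u) \<le> 1\<close> with \<open>u = 1 - S\<close>.\<close>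

lemma power2_sum_lessThan:
  fixes f :: "nat \<Rightarrow> 'a::comm_ring_1"
  shows "(\<Sum>i<k. f i)\<^sup>2 = (\<Sum>i<k. (f i)\<^sup>2) + 2 * (\<Sum>i<k. \<Sum>j<i. f i * f j)"
proof (induction k)
  case 0
  then show ?case by simp
next
  case (Suc k)
  have "(\<Sum>i<Suc k. f i)\<^sup>2 = (\<Sum>i<k. f i)\<^sup>2 + 2 * (\<Sum>j<k. f k * f j) + (f k)\<^sup>2"
    by (simp add: power2_eq_square sum_distrib_left algebra_simps)
  then show ?case
    using Suc by simp
qed

lemma Y_coef_plus_power2_le_one:
  fixes m :: real
  assumes "0 \<le> m" "m \<le> 1" and \<beta>_nonneg: "\<forall>i<k. \<beta> i \<ge> 0" and \<beta>_sum: "(\<Sum>i<k. \<beta> i) = 1"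
  shows "Y_coef \<beta> k m + (\<Sum>i<k. \<beta> i * m ^ i)\<^sup>2 \<le> 1"
proof -
  have square: "(\<Sum>i<k. \<beta> i * m ^ i)\<^sup>2
      = (\<Sum>i<k. (\<beta> i)\<^sup>2 * m ^ (2*i)) + 2 * (\<Sum>i<k. \<Sum>j<i. \<beta> i * \<beta> j * m ^ (i+j))"
    using power2_sum_lessThan[of "\<lambda>i. \<beta> i * m ^ i" k]
    by (simp add: power_mult_distrib power_add power_mult mult.commute mult.left_commute)
  have one: "1 = (\<Sum>i<k. (\<beta> i)\<^sup>2) + 2 * (\<Sum>i<k. \<Sum>j<i. \<beta> i * \<beta> j)"
    using power2_sum_lessThan[of \<beta> k] \<beta>_sum by simp
  have diagonal: "(\<beta> i)\<^sup>2 * (1 - m ^ (2*i)) + (\<beta> i)\<^sup>2 * m ^ (2*i) = (\<beta> i)\<^sup>2" for i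
    by (simp add: algebra_simps)
  have cross: "\<beta> i * \<beta> j * m ^ (i - j) * (1 - m ^ (2*j)) + \<beta> i * \<beta> j * m ^ (i+j) \<le> \<beta> i * \<beta> j"
    if "i < k" "j < i" for i j
  proof -
    have "m ^ (i - j) * m ^ (2*j) = m ^ (i+j)"
      using that by (simp add: power_add[symmetric] add.commute)
    then have "\<beta> i * \<beta> j * m ^ (i - j) * (1 - m ^ (2*j)) + \<beta> i * \<beta> j * m ^ (i+j)
        = \<beta> i * \<beta> j * m ^ (i - j)"
      by (simp add: algebra_simps)
    also have "\<dots> \<le> \<beta> i * \<beta> j"
      using \<beta>_nonneg that assms by (intro mult_left_le mult_nonneg_nonneg power_le_one) auto
    finally show ?thesis .
  qed
  have "(\<Sum>i<k. \<Sum>j<i. \<beta> i * \<beta> j * m ^ (i - j) * (1 - m ^ (2*j)))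
        + (\<Sum>i<k. \<Sum>j<i. \<beta> i * \<beta> j * m ^ (i+j)) \<le> (\<Sum>i<k. \<Sum>j<i. \<beta> i * \<beta> j)"
    unfolding sum.distrib[symmetric] using cross by (intro sum_mono) auto
  moreover have "(\<Sum>i<k. (\<beta> i)\<^sup>2 * (1 - m ^ (2*i))) + (\<Sum>i<k. (\<beta> i)\<^sup>2 * m ^ (2*i))
      = (\<Sum>i<k. (\<beta> i)\<^sup>2)"
    unfolding sum.distrib[symmetric] diagonal ..
  ultimately show ?thesis
    unfolding Y_coef_def square by (subst one) linarith
qed

lemma weighted_power_sum_less_one:
  fixes m :: real
  assumes "0 \<le> m" "m < 1" and \<beta>_nonneg: "\<forall>i<k. \<beta> i \<ge> 0" and \<beta>_sum: "(\<Sum>i<k. \<beta> i) = 1"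
    and "\<beta> 0 < 1"
  shows "(\<Sum>i<k. \<beta> i * m ^ i) < 1"
proof -
  have "k \<ge> 1"
    using \<beta>_sum by (cases k) auto
  then have split: "{..<k} = insert 0 {1..<k}"
    by auto
  have "(\<Sum>i\<in>{1..<k}. \<beta> i * m ^ i) \<le> (\<Sum>i\<in>{1..<k}. \<beta> i * m)"
  proof (intro sum_mono)
    fix i assume "i \<in> {1..<k}"
    then have "m ^ i \<le> m" "\<beta> i \<ge> 0"
      using assms power_decreasing[of 1 i m] by auto
    then show "\<beta> i * m ^ i \<le> \<beta> i * m"
      by (simp add: mult_left_mono)
  qed
  also have "\<dots> = (1 - \<beta> 0) * m"
    using \<beta>_sum by (simp add: split sum_distrib_right[symmetric])
  also have "\<dots> < 1 - \<beta> 0"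
    using assms by simp
  finally show ?thesis
    by (simp add: split)
qed

lemma lookahead_variance_factor_le_one:
  fixes \<alpha> S Y :: real
  assumes "0 < \<alpha>" "\<alpha> \<le> 1" "0 \<le> S" "S < 1" "Y \<le> 1 - S\<^sup>2"
  shows "\<alpha>\<^sup>2 * Y / (1 - ((1 - \<alpha>) + \<alpha> * S)\<^sup>2) \<le> 1"
proof -
  define u where "u = 1 - S"
  have "0 < \<alpha> * u" "\<alpha> * u \<le> 1"
    using assms mult_mono[of \<alpha> 1 u 1] by (auto simp: u_def)
  have denominator: "1 - ((1 - \<alpha>) + \<alpha> * S)\<^sup>2 = \<alpha> * u * (2 - \<alpha> * u)"
    by (simp add: u_def power2_eq_square algebra_simps)
  have "\<alpha>\<^sup>2 * Y \<le> \<alpha>\<^sup>2 * (1 - S\<^sup>2)"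
    using assms by (simp add: mult_left_mono)
  also have "\<dots> = (\<alpha> * u) * (\<alpha> * (2 - u))"
    by (simp add: u_def power2_eq_square algebra_simps)
  also have "\<dots> \<le> (\<alpha> * u) * (2 - \<alpha> * u)"
    using \<open>0 < \<alpha> * u\<close> \<open>\<alpha> \<le> 1\<close> by (intro mult_left_mono) (auto simp: algebra_simps)
  finally show ?thesis
    using \<open>0 < \<alpha> * u\<close> \<open>\<alpha> * u \<le> 1\<close> by (simp add: denominator divide_le_eq)
qed

lemma V_ERM_nonneg:
  assumes "0 < \<eta> * h $ j" "\<eta> * h $ j < 1" "\<sigma>2 $ j \<ge> 0"
  shows "0 \<le> V_ERM \<eta> h \<sigma>2 $ j"
proof -
  have "(Mdiag \<eta> h $ j)\<^sup>2 < 1"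
    using assms by (simp add: Mdiag_def abs_square_less_1)
  then show ?thesis
    using assms by (simp add: V_ERM_def)
qed

theorem mainTheorem3:
  fixes h \<sigma>2 :: "real ^ 'd" and \<eta> \<alpha> :: real and \<beta> :: "nat \<Rightarrow> real" and k :: nat
  assumes "\<forall>j. 0 < \<eta> * h $ j \<and> \<eta> * h $ j < 1"
    and "\<forall>j. \<sigma>2 $ j \<ge> 0"
    and "0 < \<alpha>" and "\<alpha> \<le> 1"
    and "\<forall>i<k. \<beta> i \<ge> 0"
    and "(\<Sum>i<k. \<beta> i) = 1"
    and "\<beta> 0 < 1"
  shows "\<forall>j. V_AvgLA \<alpha> \<beta> k \<eta> h \<sigma>2 $ j \<le> V_ERM \<eta> h \<sigma>2 $ j"
proof
  fix j
  define m where "m = Mdiag \<eta> h $ j"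
  have m: "0 < m" "m < 1"
    using assms(1) by (auto simp: m_def Mdiag_def)
  have "\<alpha>\<^sup>2 * Y_coef \<beta> k m / (1 - (A_coef \<alpha> \<beta> k m)\<^sup>2) \<le> 1"
    unfolding A_coef_def
  proof (rule lookahead_variance_factor_le_one)
    show "0 \<le> (\<Sum>i<k. \<beta> i * m ^ i)"
      using assms(5) m by (intro sum_nonneg) auto
    show "(\<Sum>i<k. \<beta> i * m ^ i) < 1"
      using weighted_power_sum_less_one m assms(5-7) by simp
    show "Y_coef \<beta> k m \<le> 1 - (\<Sum>i<k. \<beta> i * m ^ i)\<^sup>2"
      using Y_coef_plus_power2_le_one[OF _ _ assms(5,6), of m] m by simp
  qed (use assms(3,4) in auto)
  moreover have "0 \<le> V_ERM \<eta> h \<sigma>2 $ j"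
    using assms(1,2) V_ERM_nonneg by blast
  ultimately have "\<alpha>\<^sup>2 * Y_coef \<beta> k m / (1 - (A_coef \<alpha> \<beta> k m)\<^sup>2) * V_ERM \<eta> h \<sigma>2 $ j
      \<le> V_ERM \<eta> h \<sigma>2 $ j"
    using mult_right_mono[of _ 1] by fastforce
  then show "V_AvgLA \<alpha> \<beta> k \<eta> h \<sigma>2 $ j \<le> V_ERM \<eta> h \<sigma>2 $ j"
    by (simp add: V_AvgLA_def m_def)
qed

end
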